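(* Let $G$ be a locally compact abelian group (written additively), let $X$ be a topological vector space over $\mathbf{C}$, and let $J\subseteq G$ be a subsemigroup with non-empty interior such that $G=J-J=\{u-v: u,v\in J\}$. Then for each $n\in\mathbf{Z}_+$ the restriction map $r:P^{n}(G,X)\to P^{n}(J,X)$, $p\mapsto p|_J$, is a linear bijection. In particular, every polynomial $q:J\to X$ has a unique extension to a polynomial $p:G\to X$.
   Context: $\mathbf{Z}_+=\{0,1,2,\dots\}$. For an abelian topological semigroup $S$ (e.g. $J$ or $G$) and a topological vector space $X$, a continuous function $p:S\to X$ is a polynomial of degree at most $n$ if for all $s,t\in S$ there exist $a_0(s,t),\dots,a_n(s,t)\in X$ with $p(s+mt)=\sum_{j=0}^n a_j(s,t)m^j$ for all $m\in\mathbf{Z}_+$ (i.e. $m\mapsto p(s+mt)$ is a polynomial in $m$ of degree at most $n$). $P^n(S,X)$ denotes the space of all such polynomials. *)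

theory Defs
  imports "HOL-Analysis.Analysis"
begin

primrec nsmul :: "nat \<Rightarrow> 'a::monoid_add \<Rightarrow> 'a" where
  "nsmul 0 t = 0"
| "nsmul (Suc m) t = t + nsmul m t"

definition complex_tvs :: "(complex \<Rightarrow> 'x::topological_ab_group_add \<Rightarrow> 'x) \<Rightarrow> bool" where
  "complex_tvs smul \<longleftrightarrow> module smul \<and> continuous_on UNIV (\<lambda>z. smul (fst z) (snd z))"

definition polynomial_on ::
  "(complex \<Rightarrow> 'x::topological_ab_group_add \<Rightarrow> 'x) \<Rightarrow> 'g::{topological_space,monoid_add} set
     \<Rightarrow> nat \<Rightarrow> ('g \<Rightarrow> 'x) \<Rightarrow> bool" where
  "polynomial_on smul S n p \<longleftrightarrow> continuous_on S p \<and>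
     (\<forall>s\<in>S. \<forall>t\<in>S. \<exists>a::nat \<Rightarrow> 'x. \<forall>m::nat.
        p (s + nsmul m t) = (\<Sum>j\<le>n. smul (of_nat m ^ j) (a j)))"

definition Pspace ::
  "(complex \<Rightarrow> 'x::topological_ab_group_add \<Rightarrow> 'x) \<Rightarrow> 'g::{topological_space,monoid_add} set
     \<Rightarrow> nat \<Rightarrow> ('g \<Rightarrow> 'x) set" where
  "Pspace smul S n = {p. polynomial_on smul S n p \<and> p \<in> extensional S}"

end

theory Submission
  imports Defs
begin

text \<open>A polynomial p of degree at most n satisfies the finite difference identity
  p s = \<Sum>k=1..n+1. (-1)^(k+1) (n+1 choose k) p (s + k t),
  since the (n+1)-st forward difference of a polynomial in k of degree at most n vanishes.
  Every x \<in> G has a translate x + v \<in> J with v \<in> J, and then all x + k v (k \<ge> 1) lie in J, so the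
  identity determines a polynomial on G by its values on J.  Conversely, given a polynomial q on J,
  the right-hand side with q in place of p, for any admissible v, defines the extension: it does not
  depend on v because both choices equal the same symmetric double extrapolation, it is continuous
  because near each point a single v keeps all arguments in the interior of J, and along each ray it
  is a combination of polynomials on J.\<close>

lemma alternating_binomial_sum_Suc:
  fixes f :: "nat \<Rightarrow> 'a::comm_ring_1"
  shows "(\<Sum>k\<le>Suc d. (-1)^k * of_nat (Suc d choose k) * f k)
       = (\<Sum>k\<le>d. (-1)^k * of_nat (d choose k) * (f k - f (Suc k)))"
proof -
  have "(\<Sum>k\<le>d. (-1)^k * of_nat (d choose k) * f k)
      = (\<Sum>k\<le>Suc d. (-1)^k * of_nat (d choose k) * f k)"
    by (simp add: binomial_eq_0)
  then have shift: "(\<Sum>k\<le>d. (-1)^k * of_nat (d choose k) * f k)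
      = f 0 + (\<Sum>k\<le>d. (-1)^Suc k * of_nat (d choose Suc k) * f (Suc k))"
    by (simp only: sum.atMost_Suc_shift) simp
  have "(\<Sum>k\<le>Suc d. (-1)^k * of_nat (Suc d choose k) * f k)
      = f 0 + (\<Sum>k\<le>d. (-1)^Suc k * of_nat (d choose Suc k) * f (Suc k))
          + (\<Sum>k\<le>d. (-1)^Suc k * of_nat (d choose k) * f (Suc k))"
    by (simp add: sum.atMost_Suc_shift sum.distrib sum_subtractf sum_negf algebra_simps del: sum.atMost_Suc)
  also have "\<dots> = (\<Sum>k\<le>d. (-1)^k * of_nat (d choose k) * f k)
      - (\<Sum>k\<le>d. (-1)^k * of_nat (d choose k) * f (Suc k))"
    by (simp add: shift sum_negf)
  also have "\<dots> = (\<Sum>k\<le>d. (-1)^k * of_nat (d choose k) * (f k - f (Suc k)))"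
    by (simp add: sum_subtractf right_diff_distrib)
  finally show ?thesis .
qed

lemma alternating_binomial_sum_power_eq_0:
  assumes "j < d"
  shows "(\<Sum>k\<le>d. (-1)^k * of_nat (d choose k) * of_nat k ^ j) = (0::'a::comm_ring_1)"
  using assms
proof (induction d arbitrary: j)
  case 0
  then show ?case by simp
next
  case (Suc d)
  have diff: "of_nat k ^ j - of_nat (Suc k) ^ j = - (\<Sum>l<j. of_nat (j choose l) * of_nat k ^ l :: 'a)" for k
    using binomial_ring[of "of_nat k :: 'a" 1 j] by (simp add: lessThan_Suc_atMost[symmetric] add.commute)
  have "(\<Sum>k\<le>Suc d. (-1)^k * of_nat (Suc d choose k) * of_nat k ^ j)
      = (\<Sum>k\<le>d. (-1)^k * of_nat (d choose k) * - (\<Sum>l<j. of_nat (j choose l) * of_nat k ^ l :: 'a))"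
    by (simp only: alternating_binomial_sum_Suc diff)
  also have "\<dots> = - (\<Sum>l<j. of_nat (j choose l) * (\<Sum>k\<le>d. (-1)^k * of_nat (d choose k) * of_nat k ^ l))"
    by (simp add: sum_distrib_left sum_negf sum.swap[of _ "{..d}"] algebra_simps)
  also have "\<dots> = 0"
    using Suc by simp
  finally show ?case .
qed

lemma (in module) sum_alternating_binomial_scale_polynomial:
  "(\<Sum>k\<le>Suc n. scale ((-1)^k * of_nat (Suc n choose k)) (\<Sum>j\<le>n. scale (of_nat k ^ j) (a j))) = 0"
proof -
  have "(\<Sum>k\<le>Suc n. scale ((-1)^k * of_nat (Suc n choose k)) (\<Sum>j\<le>n. scale (of_nat k ^ j) (a j)))
      = (\<Sum>j\<le>n. scale (\<Sum>k\<le>Suc n. (-1)^k * of_nat (Suc n choose k) * of_nat k ^ j) (a j))"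
    by (simp add: scale_sum_right scale_sum_left sum.swap[of _ "{..n}"] del: sum.atMost_Suc)
  also have "\<dots> = 0"
    by (intro sum.neutral ballI) (simp add: alternating_binomial_sum_power_eq_0 del: sum.atMost_Suc)
  finally show ?thesis .
qed

lemma nsmul_add_left: "nsmul (a + b) t = nsmul a t + (nsmul b t :: 'a::monoid_add)"
  by (induction a) (simp_all add: add.assoc)

lemma nsmul_add_right: "nsmul m (t + u) = nsmul m t + (nsmul m u :: 'a::comm_monoid_add)"
  by (induction m) (simp_all add: add_ac)

lemma nsmul_mult: "nsmul (a * b) t = nsmul a (nsmul b t :: 'a::monoid_add)"
  by (induction a) (simp_all add: nsmul_add_left)

lemma nsmul_commute: "nsmul a (nsmul b t) = nsmul b (nsmul a t :: 'a::monoid_add)"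
  by (metis nsmul_mult mult.commute)

lemma nsmul_Suc_right: "nsmul (Suc m) t = nsmul m t + (t :: 'a::monoid_add)"
  using nsmul_add_left[of m 1 t] by simp

definition extrapolation ::
  "(complex \<Rightarrow> 'x::ab_group_add \<Rightarrow> 'x) \<Rightarrow> nat \<Rightarrow> ('g::monoid_add \<Rightarrow> 'x) \<Rightarrow> 'g \<Rightarrow> 'g \<Rightarrow> 'x" where
  "extrapolation smul n p x t =
     (\<Sum>k\<in>{1..Suc n}. smul ((-1)^Suc k * of_nat (Suc n choose k)) (p (x + nsmul k t)))"

lemma polynomial_on_eq_extrapolation:
  assumes "module smul" and "polynomial_on smul S n p" and "s \<in> S" and "t \<in> S"
  shows "p s = extrapolation smul n p s t"
proof -
  interpret module smul by fact
  obtain a where a: "\<And>m. p (s + nsmul m t) = (\<Sum>j\<le>n. smul (of_nat m ^ j) (a j))"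
    using assms unfolding polynomial_on_def by blast
  have "(\<Sum>k\<le>Suc n. smul ((-1)^k * of_nat (Suc n choose k)) (p (s + nsmul k t))) = 0"
    unfolding a by (rule sum_alternating_binomial_scale_polynomial)
  moreover have "{..Suc n} = insert 0 {1..Suc n}"
    by auto
  ultimately have "p s + (\<Sum>k\<in>{1..Suc n}. smul ((-1)^k * of_nat (Suc n choose k)) (p (s + nsmul k t))) = 0"
    by simp
  then show ?thesis
    by (simp add: extrapolation_def sum_negf add_eq_0_iff2)
qed

lemma polynomial_on_mono:
  assumes "module smul" and p: "polynomial_on smul S n p" and "n \<le> N"
  shows "polynomial_on smul S N p"
  unfolding polynomial_on_def
proof (intro conjI ballI)
  interpret module smul by fact
  show "continuous_on S p"
    using p by (simp add: polynomial_on_def)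
  fix s t assume "s \<in> S" "t \<in> S"
  then obtain a where a: "\<And>m. p (s + nsmul m t) = (\<Sum>j\<le>n. smul (of_nat m ^ j) (a j))"
    using p unfolding polynomial_on_def by blast
  have "p (s + nsmul m t) = (\<Sum>j\<le>N. smul (of_nat m ^ j) (if j \<le> n then a j else 0))" for m
    unfolding a using \<open>n \<le> N\<close> by (intro sum.mono_neutral_cong_left) auto
  then show "\<exists>a. \<forall>m. p (s + nsmul m t) = (\<Sum>j\<le>N. smul (of_nat m ^ j) (a j))"
    by (intro exI[of _ "\<lambda>j. if j \<le> n then a j else 0"]) blast
qed

lemma add_nsmul_mem:
  fixes J :: "'a::monoid_add set"
  assumes add_closed: "\<forall>u\<in>J. \<forall>v\<in>J. u + v \<in> J" and "s \<in> J" and "t \<in> J"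
  shows "s + nsmul m t \<in> J"
proof (induction m)
  case 0
  show ?case using \<open>s \<in> J\<close> by simp
next
  case (Suc m)
  have "s + nsmul (Suc m) t = (s + nsmul m t) + t"
    by (simp only: nsmul_Suc_right add.assoc)
  then show ?case
    using Suc add_closed \<open>t \<in> J\<close> by simp
qed

lemma add_nsmul_mem_pos:
  fixes J :: "'a::monoid_add set"
  assumes add_closed: "\<forall>u\<in>J. \<forall>v\<in>J. u + v \<in> J" and "t \<in> J" and "x + t \<in> J" and "0 < k"
  shows "x + nsmul k t \<in> J"
proof -
  obtain k' where "k = Suc k'"
    using \<open>0 < k\<close> gr0_implies_Suc by blast
  then have "x + nsmul k t = (x + t) + nsmul k' t"
    by (simp add: add.assoc)
  then show ?thesis
    using add_nsmul_mem[OF add_closed \<open>x + t \<in> J\<close> \<open>t \<in> J\<close>] by simp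
qed

lemma add_nsmul_mem_interior:
  fixes J :: "'a::topological_ab_group_add set"
  assumes add_closed: "\<forall>u\<in>J. \<forall>v\<in>J. u + v \<in> J" and "y \<in> interior J" and "t \<in> J"
  shows "y + nsmul m t \<in> interior J"
proof (induction m)
  case 0
  show ?case using \<open>y \<in> interior J\<close> by simp
next
  case (Suc m)
  let ?U = "(\<lambda>z. z - t) -` interior J"
  have "open ?U"
    by (intro open_vimage open_interior continuous_intros)
  moreover have "?U \<subseteq> J"
    using add_closed \<open>t \<in> J\<close> interior_subset by (fastforce dest: bspec[of _ _ "_ - t"])
  ultimately have "?U \<subseteq> interior J"
    by (rule interior_maximal[rotated])
  moreover have "y + nsmul (Suc m) t \<in> ?U"
    using Suc by (simp add: nsmul_Suc_right add.assoc)
  ultimately show ?case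
    by blast
qed

lemma polynomial_on_restrict:
  assumes add_closed: "\<forall>u\<in>J. \<forall>v\<in>J. u + v \<in> J" and p: "polynomial_on smul UNIV n p"
  shows "polynomial_on smul J n (restrict p J)"
  unfolding polynomial_on_def
proof (intro conjI ballI)
  show "continuous_on J (restrict p J)"
    using p continuous_on_subset by (force simp: polynomial_on_def intro: continuous_on_cong[THEN iffD1])
  fix s t assume "s \<in> J" "t \<in> J"
  moreover obtain a where "\<forall>m. p (s + nsmul m t) = (\<Sum>j\<le>n. smul (of_nat m ^ j) (a j))"
    using p unfolding polynomial_on_def by blast
  ultimately show "\<exists>a. \<forall>m. restrict p J (s + nsmul m t) = (\<Sum>j\<le>n. smul (of_nat m ^ j) (a j))"
    using add_nsmul_mem[OF add_closed] by auto
qed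

definition polynomial_extension ::
  "(complex \<Rightarrow> 'x::ab_group_add \<Rightarrow> 'x) \<Rightarrow> 'g::monoid_add set \<Rightarrow> nat \<Rightarrow> ('g \<Rightarrow> 'x) \<Rightarrow> 'g \<Rightarrow> 'x" where
  "polynomial_extension smul J n q x = extrapolation smul n q x (SOME t. t \<in> J \<and> x + t \<in> J)"

context
  fixes smul :: "complex \<Rightarrow> 'x::topological_ab_group_add \<Rightarrow> 'x"
    and J :: "'g::topological_ab_group_add set"
  assumes module: "module smul"
    and add_closed: "\<forall>u\<in>J. \<forall>v\<in>J. u + v \<in> J"
    and differences_UNIV: "{u - v | u v. u \<in> J \<and> v \<in> J} = UNIV"
begin

interpretation module smul
  by (rule module)

lemma translate_into:
  obtains v where "v \<in> J" and "x + v \<in> J"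
proof -
  obtain u v where "u \<in> J" "v \<in> J" "x = u - v"
    using differences_UNIV by blast
  then show thesis
    using that[of v] by simp
qed

lemma polynomial_on_UNIV_eqI:
  assumes p1: "polynomial_on smul UNIV n1 p1" and p2: "polynomial_on smul UNIV n2 p2"
    and agree: "\<forall>x\<in>J. p1 x = p2 x"
  shows "p1 = p2"
proof
  fix x
  let ?n = "max n1 n2"
  have p1': "polynomial_on smul UNIV ?n p1"
    by (rule polynomial_on_mono[OF module p1]) simp
  have p2': "polynomial_on smul UNIV ?n p2"
    by (rule polynomial_on_mono[OF module p2]) simp
  obtain v where "v \<in> J" "x + v \<in> J"
    using translate_into .
  then have mem: "x + nsmul k v \<in> J" if "k \<in> {1..Suc ?n}" for k
    using add_nsmul_mem_pos[OF add_closed] that by simp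
  have "p1 x = extrapolation smul ?n p1 x v"
    by (rule polynomial_on_eq_extrapolation[OF module p1']) auto
  also have "\<dots> = extrapolation smul ?n p2 x v"
    unfolding extrapolation_def using mem agree by (intro sum.cong) auto
  also have "\<dots> = p2 x"
    by (rule polynomial_on_eq_extrapolation[OF module p2', symmetric]) auto
  finally show "p1 x = p2 x" .
qed

context
  fixes q :: "'g \<Rightarrow> 'x" and n :: nat
  assumes q: "polynomial_on smul J n q"
begin

lemma extrapolation_independent:
  assumes t: "t \<in> J" "x + t \<in> J" and t': "t' \<in> J" "x + t' \<in> J"
  shows "extrapolation smul n q x t = extrapolation smul n q x t'"
proof -
  define e :: "nat \<Rightarrow> complex" where "e k = (-1)^Suc k * of_nat (Suc n choose k)" for k
  define g where "g k l = q (x + nsmul k t + nsmul l t')" for k l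
  let ?K = "{1..Suc n}"
  have row: "q (x + nsmul k t) = (\<Sum>l\<in>?K. smul (e l) (g k l))" if "k \<in> ?K" for k
    using polynomial_on_eq_extrapolation[OF module q add_nsmul_mem_pos[OF add_closed t] t'(1)] that
    by (simp add: extrapolation_def e_def g_def)
  have column: "q (x + nsmul l t') = (\<Sum>k\<in>?K. smul (e k) (g k l))" if "l \<in> ?K" for l
    using polynomial_on_eq_extrapolation[OF module q add_nsmul_mem_pos[OF add_closed t'] t(1)] that
    by (simp add: extrapolation_def e_def g_def add_ac)
  have expand: "extrapolation smul n q x s = (\<Sum>k\<in>?K. smul (e k) (q (x + nsmul k s)))" for s
    unfolding extrapolation_def e_def ..
  have "extrapolation smul n q x t = (\<Sum>k\<in>?K. smul (e k) (\<Sum>l\<in>?K. smul (e l) (g k l)))"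
    unfolding expand using row by (intro sum.cong) simp_all
  also have "\<dots> = (\<Sum>l\<in>?K. \<Sum>k\<in>?K. smul (e k * e l) (g k l))"
    unfolding scale_sum_right scale_scale by (rule sum.swap)
  also have "\<dots> = (\<Sum>l\<in>?K. smul (e l) (\<Sum>k\<in>?K. smul (e k) (g k l)))"
    unfolding scale_sum_right scale_scale by (simp only: mult.commute)
  also have "\<dots> = extrapolation smul n q x t'"
    unfolding expand using column by (intro sum.cong) simp_all
  finally show ?thesis .
qed

lemma polynomial_extension_eq_extrapolation:
  assumes "t \<in> J" and "x + t \<in> J"
  shows "polynomial_extension smul J n q x = extrapolation smul n q x t"
proof -
  have "\<exists>t. t \<in> J \<and> x + t \<in> J"
    using assms by blast
  from someI_ex[OF this] show ?thesis
    unfolding polynomial_extension_def using extrapolation_independent assms by blast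
qed

lemma polynomial_extension_eq_on:
  assumes "x \<in> J"
  shows "polynomial_extension smul J n q x = q x"
  using polynomial_extension_eq_extrapolation[of x x] polynomial_on_eq_extrapolation[OF module q]
    add_closed assms by simp

lemma continuous_polynomial_extension:
  assumes interior: "interior J \<noteq> {}" and scale_cont: "\<And>c. continuous_on UNIV (smul c)"
  shows "continuous_on UNIV (polynomial_extension smul J n q)"
proof -
  let ?K = "{1..Suc n}"
  \<comment> \<open>on U t all steps x + k t lie in the interior of J, so there the extension is one fixed
    extrapolation, continuous because q is continuous at interior points\<close>
  define U where "U t = (\<Inter>k\<in>?K. (\<lambda>x. x + nsmul k t) -` interior J)" for t
  have "open (U t)" for t
    unfolding U_def by (intro open_INT ballI finite_atLeastAtMost open_vimage open_interior continuous_intros)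
  moreover have "continuous_on (U t) (polynomial_extension smul J n q)" if "t \<in> J" for t
  proof -
    have "continuous_on (interior J) q"
      using q interior_subset by (auto simp: polynomial_on_def intro: continuous_on_subset)
    then have "continuous_on (U t) (\<lambda>x. q (x + nsmul k t))" if "k \<in> ?K" for k
      by (rule continuous_on_compose2) (use that in \<open>auto intro: continuous_intros simp: U_def\<close>)
    then have "continuous_on (U t) (\<lambda>x. extrapolation smul n q x t)"
      unfolding extrapolation_def
      by (intro continuous_on_sum continuous_on_compose2[OF scale_cont]) auto
    moreover have "extrapolation smul n q x t = polynomial_extension smul J n q x" if "x \<in> U t" for x
    proof -
      have "1 \<in> ?K"
        by simp
      then have "x + nsmul 1 t \<in> interior J"
        using that unfolding U_def by blast
      then show ?thesis
        using interior_subset \<open>t \<in> J\<close> by (auto intro: polynomial_extension_eq_extrapolation[symmetric])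
    qed
    ultimately show ?thesis
      by (rule continuous_on_eq)
  qed
  moreover have "\<exists>t\<in>J. x0 \<in> U t" for x0
  proof -
    obtain w where w: "w \<in> interior J"
      using interior by blast
    obtain v where "v \<in> J" "x0 + v \<in> J"
      using translate_into .
    have "w + (x0 + v) \<in> interior J"
      using add_nsmul_mem_interior[OF add_closed w \<open>x0 + v \<in> J\<close>, of 1] by simp
    then have "x0 + (w + v) \<in> interior J"
      by (simp only: add.left_commute)
    moreover have "w + v \<in> J"
      using add_closed w interior_subset \<open>v \<in> J\<close> by blast
    ultimately have "x0 + nsmul k (w + v) \<in> interior J" if "k \<in> ?K" for k
      using add_nsmul_mem_interior[OF add_closed, of "x0 + (w + v)" "w + v" "k - 1"] that
      by (cases k) (simp_all add: add.assoc)
    then have "x0 \<in> U (w + v)"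
      by (simp add: U_def)
    then show ?thesis
      using \<open>w + v \<in> J\<close> by blast
  qed
  ultimately have "continuous_on (\<Union>t\<in>J. U t) (polynomial_extension smul J n q)"
    by (intro continuous_on_open_UN)
  moreover have "(\<Union>t\<in>J. U t) = UNIV"
    using \<open>\<And>x0. \<exists>t\<in>J. x0 \<in> U t\<close> by blast
  ultimately show ?thesis
    by simp
qed

lemma polynomial_extension_along_ray:
  "\<exists>a. \<forall>m. polynomial_extension smul J n q (s + nsmul m t) = (\<Sum>j\<le>n. smul (of_nat m ^ j) (a j))"
proof -
  define e :: "nat \<Rightarrow> complex" where "e k = (-1)^Suc k * of_nat (Suc n choose k)" for k
  let ?K = "{1..Suc n}"
  obtain v0 where v0: "v0 \<in> J" and u0: "s + v0 \<in> J"
    using translate_into .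
  obtain v where v: "v \<in> J" and u: "t + v \<in> J"
    using translate_into .
  \<comment> \<open>each shifted ray s + k v0 + m (t + k v) starts and steps in J, so q is a polynomial along it\<close>
  have "s + nsmul k v0 \<in> J" "t + nsmul k v \<in> J" if "k \<in> ?K" for k
    using add_nsmul_mem_pos[OF add_closed v0, of s k] add_nsmul_mem_pos[OF add_closed v, of t k]
      u0 u that by auto
  then have "\<forall>k\<in>?K. \<exists>a. \<forall>m. q ((s + nsmul k v0) + nsmul m (t + nsmul k v))
      = (\<Sum>j\<le>n. smul (of_nat m ^ j) (a j))"
    using q unfolding polynomial_on_def by blast
  from bchoice[OF this] obtain A where A: "\<forall>k\<in>?K. \<forall>m. q ((s + nsmul k v0) + nsmul m (t + nsmul k v))
      = (\<Sum>j\<le>n. smul (of_nat m ^ j) (A k j))"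
    by blast
  have "polynomial_extension smul J n q (s + nsmul m t)
      = (\<Sum>j\<le>n. smul (of_nat m ^ j) (\<Sum>k\<in>?K. smul (e k) (A k j)))" for m
  proof -
    have "s + nsmul m t + (v0 + nsmul m v) = (s + v0) + nsmul m (t + v)"
      by (simp add: nsmul_add_right add_ac)
    also have "\<dots> \<in> J"
      by (rule add_nsmul_mem[OF add_closed u0 u])
    finally have "s + nsmul m t + (v0 + nsmul m v) \<in> J" .
    then have "polynomial_extension smul J n q (s + nsmul m t)
        = extrapolation smul n q (s + nsmul m t) (v0 + nsmul m v)"
      using add_nsmul_mem[OF add_closed v0 v] by (rule polynomial_extension_eq_extrapolation[rotated])
    also have "\<dots> = (\<Sum>k\<in>?K. smul (e k) (q ((s + nsmul k v0) + nsmul m (t + nsmul k v))))"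
    proof -
      have "s + nsmul m t + nsmul k (v0 + nsmul m v) = (s + nsmul k v0) + nsmul m (t + nsmul k v)" for k
        by (simp add: nsmul_add_right nsmul_commute[of k m] add_ac)
      then show ?thesis
        by (simp only: extrapolation_def e_def)
    qed
    also have "\<dots> = (\<Sum>k\<in>?K. \<Sum>j\<le>n. smul (e k * of_nat m ^ j) (A k j))"
      using A by (simp add: scale_sum_right)
    also have "\<dots> = (\<Sum>j\<le>n. smul (of_nat m ^ j) (\<Sum>k\<in>?K. smul (e k) (A k j)))"
      unfolding scale_sum_right scale_scale by (subst sum.swap) (simp only: mult.commute)
    finally show ?thesis .
  qed
  then show ?thesis
    by (intro exI[of _ "\<lambda>j. \<Sum>k\<in>?K. smul (e k) (A k j)"] allI)
qed

lemma polynomial_on_polynomial_extension: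
  assumes "interior J \<noteq> {}" and "\<And>c. continuous_on UNIV (smul c)"
  shows "polynomial_on smul UNIV n (polynomial_extension smul J n q)"
  unfolding polynomial_on_def
  using continuous_polynomial_extension[OF assms] polynomial_extension_along_ray by blast

end

lemma bij_betw_restrict_Pspace:
  assumes "interior J \<noteq> {}" and "\<And>c. continuous_on UNIV (smul c)"
  shows "bij_betw (\<lambda>p. restrict p J) (Pspace smul UNIV n) (Pspace smul J n)"
proof (rule bij_betwI')
  fix p1 p2 :: "'g \<Rightarrow> 'x"
  assume "p1 \<in> Pspace smul UNIV n" "p2 \<in> Pspace smul UNIV n"
  then show "(restrict p1 J = restrict p2 J) = (p1 = p2)"
    using polynomial_on_UNIV_eqI[of n p1 n p2]
    by (auto simp: Pspace_def restrict_def fun_eq_iff)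
next
  fix p :: "'g \<Rightarrow> 'x"
  assume "p \<in> Pspace smul UNIV n"
  then show "restrict p J \<in> Pspace smul J n"
    using polynomial_on_restrict[OF add_closed] by (simp add: Pspace_def)
next
  fix q assume q: "q \<in> Pspace smul J n"
  let ?p = "polynomial_extension smul J n q"
  have "?p \<in> Pspace smul UNIV n"
    using q polynomial_on_polynomial_extension[OF _ assms] by (simp add: Pspace_def)
  moreover have "q = restrict ?p J"
    using q polynomial_extension_eq_on by (auto simp: Pspace_def extensional_def)
  ultimately show "\<exists>p\<in>Pspace smul UNIV n. q = restrict p J"
    by blast
qed

lemma ex1_polynomial_extension:
  assumes "interior J \<noteq> {}" and "\<And>c. continuous_on UNIV (smul c)"
    and q: "polynomial_on smul J n q"
  shows "\<exists>!p. (\<exists>n'. polynomial_on smul UNIV n' p) \<and> (\<forall>x\<in>J. p x = q x)"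
proof (rule ex1I)
  show "(\<exists>n'. polynomial_on smul UNIV n' (polynomial_extension smul J n q))
      \<and> (\<forall>x\<in>J. polynomial_extension smul J n q x = q x)"
    using polynomial_on_polynomial_extension[OF q assms(1,2)] polynomial_extension_eq_on[OF q] by blast
  fix p assume "(\<exists>n'. polynomial_on smul UNIV n' p) \<and> (\<forall>x\<in>J. p x = q x)"
  then show "p = polynomial_extension smul J n q"
    using polynomial_on_UNIV_eqI polynomial_on_polynomial_extension[OF q assms(1,2)]
      polynomial_extension_eq_on[OF q] by metis
qed

end

lemma complex_tvs_continuous_scale:
  assumes "complex_tvs smul"
  shows "continuous_on UNIV (smul c)"
proof -
  have "continuous_on UNIV (\<lambda>z. smul (fst z) (snd z))"
    using assms by (simp add: complex_tvs_def)
  then have "continuous_on UNIV (\<lambda>x. smul (fst (c, x)) (snd (c, x)))"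
    by (rule continuous_on_compose2) (intro continuous_intros, simp)
  then show ?thesis
    by simp
qed

theorem theorem1p5:
  fixes J :: "'g::{topological_ab_group_add, t2_space} set"
    and smul :: "complex \<Rightarrow> 'x::topological_ab_group_add \<Rightarrow> 'x"
  assumes lc: "locally_compact_space (euclidean :: 'g topology)"
    and tvs: "complex_tvs smul"
    and semigroup: "\<forall>u\<in>J. \<forall>v\<in>J. u + v \<in> J"
    and interior: "interior J \<noteq> {}"
    and gen: "{u - v | u v. u \<in> J \<and> v \<in> J} = UNIV"
  shows "(\<forall>n. bij_betw (\<lambda>p. restrict p J) (Pspace smul UNIV n) (Pspace smul J n)
            \<and> (\<forall>p\<in>Pspace smul UNIV n. \<forall>q\<in>Pspace smul UNIV n. \<forall>c d.
                 restrict (\<lambda>x. smul c (p x) + smul d (q x)) J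
                 = (\<lambda>x\<in>J. smul c (restrict p J x) + smul d (restrict q J x))))
       \<and> (\<forall>q n. polynomial_on smul J n q \<longrightarrow>
            (\<exists>!p. (\<exists>n'. polynomial_on smul UNIV n' p) \<and> (\<forall>x\<in>J. p x = q x)))"
proof -
  have module: "module smul"
    using tvs by (simp add: complex_tvs_def)
  note scale_cont = complex_tvs_continuous_scale[OF tvs]
  have "restrict (\<lambda>x. smul c (p x) + smul d (q x)) J
      = (\<lambda>x\<in>J. smul c (restrict p J x) + smul d (restrict q J x))" for p q :: "'g \<Rightarrow> 'x" and c d
    by (auto simp: restrict_def)
  then show ?thesis
    using bij_betw_restrict_Pspace[OF module semigroup gen interior scale_cont]
      ex1_polynomial_extension[OF module semigroup gen interior scale_cont] by blast
qed

end
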